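(* Let $\mathcal A$ be an algebra over a field $k$ and let $S$ be a commutative, associative, unital $k$-algebra. Then $$\mathcal D(\mathcal A\otimes S)=\mathcal D_S(\mathcal A\otimes S)\oplus\mathcal D_{\mathcal A\otimes 1}(\mathcal A\otimes S),$$ a direct sum of vector spaces.
   Context: An algebra over $k$ is a $k$-vector space with a bilinear product (not necessarily associative). $\mathcal D(\mathcal B)$ denotes the Lie algebra of derivations of an algebra $\mathcal B$. The algebra $\mathcal A\otimes S$ has product $(a\otimes s)(a'\otimes s')=aa'\otimes ss'$ and is an $S$-bimodule via $s'\cdot(a\otimes s)=(a\otimes s)\cdot s'=a\otimes ss'$. $\mathcal D_S(\mathcal A\otimes S)$ is the set of $d\in\mathcal D(\mathcal A\otimes S)$ with $d(a\otimes ss')=s'd(a\otimes s)$ for all $a\in\mathcal A$, $s,s'\in S$. $\mathcal D_{\mathcal A\otimes 1}(\mathcal A\otimes S)=\{\delta\in\mathcal D(\mathcal A\otimes S)\mid \delta(\mathcal A\otimes 1)=0\}$. *)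

theory Defs
  imports Complex_Main "HOL-Library.Function_Algebras"
begin

definition derivations ::
  "'t set \<Rightarrow> ('t \<Rightarrow> 't \<Rightarrow> 't) \<Rightarrow> ('k \<Rightarrow> 't \<Rightarrow> 't) \<Rightarrow> ('t \<Rightarrow> 't \<Rightarrow> 't) \<Rightarrow> ('t \<Rightarrow> 't) set" where
  "derivations T add scale mul =
     {d. (\<forall>X\<in>T. d X \<in> T)
       \<and> (\<forall>X\<in>T. \<forall>Y\<in>T. d (add X Y) = add (d X) (d Y))
       \<and> (\<forall>c. \<forall>X\<in>T. d (scale c X) = scale c (d X))
       \<and> (\<forall>X\<in>T. \<forall>Y\<in>T. d (mul X Y) = add (mul (d X) Y) (mul X (d Y)))}"

section \<open>The tensor product A \<otimes>_k S, constructed as the free k-vector space on A \<times> S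
  (finitely supported functions) modulo the bilinearity relations\<close>

definition fsupp :: "('x \<Rightarrow> 'k::zero) set" where
  "fsupp = {f. finite {p. f p \<noteq> 0}}"

definition fdelta :: "'x \<Rightarrow> 'x \<Rightarrow> 'k::{zero,one}" where
  "fdelta p = (\<lambda>q. if q = p then 1 else 0)"

definition fscale :: "'k::times \<Rightarrow> ('x \<Rightarrow> 'k) \<Rightarrow> 'x \<Rightarrow> 'k" where
  "fscale c f = (\<lambda>p. c * f p)"

definition tens_rels ::
  "('k::field \<Rightarrow> 'a::ab_group_add \<Rightarrow> 'a) \<Rightarrow> ('k \<Rightarrow> 's::ab_group_add \<Rightarrow> 's) \<Rightarrow> ('a \<times> 's \<Rightarrow> 'k) set" where
  "tens_rels sA sS =
     {fdelta (a + a', s) - fdelta (a, s) - fdelta (a', s) | a a' s. True}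
   \<union> {fdelta (a, s + s') - fdelta (a, s) - fdelta (a, s') | a s s'. True}
   \<union> {fdelta (sA c a, s) - fscale c (fdelta (a, s)) | c a s. True}
   \<union> {fdelta (a, sS c s) - fscale c (fdelta (a, s)) | c a s. True}"

text \<open>The k-linear span of the relations (the zero of the tensor product).\<close>
definition tens_null ::
  "('k::field \<Rightarrow> 'a::ab_group_add \<Rightarrow> 'a) \<Rightarrow> ('k \<Rightarrow> 's::ab_group_add \<Rightarrow> 's) \<Rightarrow> ('a \<times> 's \<Rightarrow> 'k) set" where
  "tens_null sA sS = {(\<Sum>v\<in>t. fscale (r v) v) | t r. finite t \<and> t \<subseteq> tens_rels sA sS}"

text \<open>Elements of the tensor product are cosets of the null subspace.\<close>
definition tcls ::
  "('k::field \<Rightarrow> 'a::ab_group_add \<Rightarrow> 'a) \<Rightarrow> ('k \<Rightarrow> 's::ab_group_add \<Rightarrow> 's) \<Rightarrow> ('a \<times> 's \<Rightarrow> 'k) \<Rightarrow> ('a \<times> 's \<Rightarrow> 'k) set" where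
  "tcls sA sS f = {g. g - f \<in> tens_null sA sS}"

definition tens_carrier ::
  "('k::field \<Rightarrow> 'a::ab_group_add \<Rightarrow> 'a) \<Rightarrow> ('k \<Rightarrow> 's::ab_group_add \<Rightarrow> 's) \<Rightarrow> ('a \<times> 's \<Rightarrow> 'k) set set" where
  "tens_carrier sA sS = tcls sA sS ` fsupp"

definition tens ::
  "('k::field \<Rightarrow> 'a::ab_group_add \<Rightarrow> 'a) \<Rightarrow> ('k \<Rightarrow> 's::ab_group_add \<Rightarrow> 's) \<Rightarrow> 'a \<Rightarrow> 's \<Rightarrow> ('a \<times> 's \<Rightarrow> 'k) set" where
  "tens sA sS a s = tcls sA sS (fdelta (a, s))"

definition tzero ::
  "('k::field \<Rightarrow> 'a::ab_group_add \<Rightarrow> 'a) \<Rightarrow> ('k \<Rightarrow> 's::ab_group_add \<Rightarrow> 's) \<Rightarrow> ('a \<times> 's \<Rightarrow> 'k) set" where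
  "tzero sA sS = tens_null sA sS"

definition tadd :: "('x \<Rightarrow> 'k::plus) set \<Rightarrow> ('x \<Rightarrow> 'k) set \<Rightarrow> ('x \<Rightarrow> 'k) set" where
  "tadd X Y = {x + y | x y. x \<in> X \<and> y \<in> Y}"

definition tscale ::
  "('k::field \<Rightarrow> 'a::ab_group_add \<Rightarrow> 'a) \<Rightarrow> ('k \<Rightarrow> 's::ab_group_add \<Rightarrow> 's) \<Rightarrow> 'k \<Rightarrow> ('a \<times> 's \<Rightarrow> 'k) set \<Rightarrow> ('a \<times> 's \<Rightarrow> 'k) set" where
  "tscale sA sS c X = (\<Union>x\<in>X. tcls sA sS (fscale c x))"

text \<open>Product on the free space: bilinear extension of
  (a,s)\<cdot>(a',s') = (a a', s s').\<close>
definition fmul :: "('a \<Rightarrow> 'a \<Rightarrow> 'a) \<Rightarrow> ('a \<times> 's::times \<Rightarrow> 'k::field) \<Rightarrow> ('a \<times> 's \<Rightarrow> 'k) \<Rightarrow> 'a \<times> 's \<Rightarrow> 'k" where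
  "fmul mA f g = (\<lambda>(b, t). \<Sum>(p, q) \<in> {(p, q). f p \<noteq> 0 \<and> g q \<noteq> 0 \<and> mA (fst p) (fst q) = b \<and> snd p * snd q = t}.
       f p * g q)"

definition tmul ::
  "('k::field \<Rightarrow> 'a::ab_group_add \<Rightarrow> 'a) \<Rightarrow> ('a \<Rightarrow> 'a \<Rightarrow> 'a) \<Rightarrow> ('k \<Rightarrow> 's::{ab_group_add,times} \<Rightarrow> 's) \<Rightarrow>
   ('a \<times> 's \<Rightarrow> 'k) set \<Rightarrow> ('a \<times> 's \<Rightarrow> 'k) set \<Rightarrow> ('a \<times> 's \<Rightarrow> 'k) set" where
  "tmul sA mA sS X Y = (\<Union>x\<in>X. \<Union>y\<in>Y. tcls sA sS (fmul mA x y))"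

text \<open>Right S-action on the free space: (a,s)\<cdot>s' = (a, s s'), extended linearly.\<close>
definition fsact :: "'s::times \<Rightarrow> ('a \<times> 's \<Rightarrow> 'k::field) \<Rightarrow> 'a \<times> 's \<Rightarrow> 'k" where
  "fsact s' f = (\<lambda>(b, t). \<Sum>p \<in> {p. f p \<noteq> 0 \<and> fst p = b \<and> snd p * s' = t}. f p)"

definition tsact ::
  "('k::field \<Rightarrow> 'a::ab_group_add \<Rightarrow> 'a) \<Rightarrow> ('k \<Rightarrow> 's::{ab_group_add,times} \<Rightarrow> 's) \<Rightarrow> 's \<Rightarrow>
   ('a \<times> 's \<Rightarrow> 'k) set \<Rightarrow> ('a \<times> 's \<Rightarrow> 'k) set" where
  "tsact sA sS s' X = (\<Union>x\<in>X. tcls sA sS (fsact s' x))"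

definition tens_der ::
  "('k::field \<Rightarrow> 'a::ab_group_add \<Rightarrow> 'a) \<Rightarrow> ('a \<Rightarrow> 'a \<Rightarrow> 'a) \<Rightarrow> ('k \<Rightarrow> 's::{ab_group_add,times} \<Rightarrow> 's) \<Rightarrow>
   (('a \<times> 's \<Rightarrow> 'k) set \<Rightarrow> ('a \<times> 's \<Rightarrow> 'k) set) set" where
  "tens_der sA mA sS = derivations (tens_carrier sA sS) tadd (tscale sA sS) (tmul sA mA sS)"

definition tens_der_S ::
  "('k::field \<Rightarrow> 'a::ab_group_add \<Rightarrow> 'a) \<Rightarrow> ('a \<Rightarrow> 'a \<Rightarrow> 'a) \<Rightarrow> ('k \<Rightarrow> 's::{ab_group_add,times} \<Rightarrow> 's) \<Rightarrow>
   (('a \<times> 's \<Rightarrow> 'k) set \<Rightarrow> ('a \<times> 's \<Rightarrow> 'k) set) set" where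
  "tens_der_S sA mA sS = {d \<in> tens_der sA mA sS.
     \<forall>a s s'. d (tens sA sS a (s * s')) = tsact sA sS s' (d (tens sA sS a s))}"

definition tens_der_A1 ::
  "('k::field \<Rightarrow> 'a::ab_group_add \<Rightarrow> 'a) \<Rightarrow> ('a \<Rightarrow> 'a \<Rightarrow> 'a) \<Rightarrow> ('k \<Rightarrow> 's::{ab_group_add,one,times} \<Rightarrow> 's) \<Rightarrow>
   (('a \<times> 's \<Rightarrow> 'k) set \<Rightarrow> ('a \<times> 's \<Rightarrow> 'k) set) set" where
  "tens_der_A1 sA mA sS = {d \<in> tens_der sA mA sS. \<forall>a. d (tens sA sS a 1) = tzero sA sS}"

end

theory Submission
  imports Defs
begin

text \<open>Realise \<open>A \<otimes> S\<close> as the free space on \<open>A \<times> S\<close> modulo the bilinearity relations.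
  A derivation \<open>d\<close> of \<open>A \<otimes> S\<close> lifts to a linear map \<open>\<psi>\<close> of the free space that preserves
  the relations and satisfies the Leibniz rule modulo them. Its \<open>S\<close>-linear part
  \<open>\<phi>(a \<otimes> s) = \<psi>(a \<otimes> 1) s\<close> has the same properties, so it induces a derivation in
  \<open>\<D>\<^sub>S\<close>, and \<open>\<psi> - \<phi>\<close> induces one vanishing on \<open>A \<otimes> 1\<close>. Conversely, a derivation in both
  summands satisfies \<open>d(a \<otimes> s) = d(a \<otimes> 1) s = 0\<close>.\<close>

section \<open>Finitely supported functions and their linear maps\<close>

lemma fscale_apply: "fscale c f p = c * f p"
  by (simp add: fscale_def)

lemma fdelta_apply: "fdelta p q = (if q = p then 1 else 0)"
  by (simp add: fdelta_def)

interpretation fm: module "fscale :: 'k::comm_ring_1 \<Rightarrow> ('x \<Rightarrow> 'k) \<Rightarrow> 'x \<Rightarrow> 'k"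
  by unfold_locales (auto simp: fscale_def algebra_simps)

lemma fsupp_iff: "f \<in> fsupp \<longleftrightarrow> finite {p. f p \<noteq> 0}"
  by (simp add: fsupp_def)

lemma fsupp_subspace: "fm.subspace (fsupp :: ('x \<Rightarrow> 'k::comm_ring_1) set)"
proof (rule fm.subspaceI)
  show "0 \<in> (fsupp :: ('x \<Rightarrow> 'k) set)"
    by (simp add: fsupp_def)
next
  fix f g :: "'x \<Rightarrow> 'k"
  assume "f \<in> fsupp" "g \<in> fsupp"
  moreover have "{p. (f + g) p \<noteq> 0} \<subseteq> {p. f p \<noteq> 0} \<union> {p. g p \<noteq> 0}"
    by auto
  ultimately show "f + g \<in> fsupp"
    by (auto simp: fsupp_iff intro: finite_subset)
next
  fix c and f :: "'x \<Rightarrow> 'k"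
  assume "f \<in> fsupp"
  moreover have "{p. fscale c f p \<noteq> 0} \<subseteq> {p. f p \<noteq> 0}"
    by (auto simp: fscale_apply)
  ultimately show "fscale c f \<in> fsupp"
    by (auto simp: fsupp_iff intro: finite_subset)
qed

lemmas fsupp_zero [simp] = fm.subspace_0[OF fsupp_subspace]
  and fsupp_add = fm.subspace_add[OF fsupp_subspace]
  and fsupp_diff = fm.subspace_diff[OF fsupp_subspace]
  and fsupp_scale = fm.subspace_scale[OF fsupp_subspace]

lemma fsupp_fdelta [simp]: "(fdelta p :: 'x \<Rightarrow> 'k::comm_ring_1) \<in> fsupp"
proof -
  have "{q. (fdelta p :: 'x \<Rightarrow> 'k) q \<noteq> 0} \<subseteq> {p}"
    by (auto simp: fdelta_apply)
  then show ?thesis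
    by (auto simp: fsupp_iff intro: finite_subset)
qed

lemma fsupp_induct [consumes 1, case_names zero add]:
  fixes f :: "'x \<Rightarrow> 'k::comm_ring_1"
  assumes "f \<in> fsupp"
    and "P 0"
    and "\<And>c p g. g \<in> fsupp \<Longrightarrow> P g \<Longrightarrow> P (fscale c (fdelta p) + g)"
  shows "P f"
proof -
  have "P f" if "finite A" "{p. f p \<noteq> 0} \<subseteq> A" for A and f :: "'x \<Rightarrow> 'k"
    using that
  proof (induction A arbitrary: f rule: finite_induct)
    case empty
    then have "f = 0"
      by auto
    then show ?case
      using assms(2) by (simp only:)
  next
    case (insert p A)
    define g where "g = (\<lambda>q. if q = p then 0 else f q)"
    have g_supp: "{q. g q \<noteq> 0} \<subseteq> A"
      using insert.prems by (auto simp: g_def)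
    then have "g \<in> fsupp"
      using insert.hyps(1) by (auto simp: fsupp_iff intro: finite_subset)
    moreover have "P g"
      using insert.IH g_supp .
    ultimately have "P (fscale (f p) (fdelta p) + g)"
      by (rule assms(3))
    moreover have "fscale (f p) (fdelta p) + g = f"
      by (auto simp: g_def fdelta_apply fscale_apply)
    ultimately show ?case
      by simp
  qed
  then show ?thesis
    using assms(1) by (auto simp: fsupp_iff)
qed

text \<open>Linearity is only required on \<^const>\<open>fsupp\<close>: the linear extension \<open>lext\<close> below is
  junk outside it, where its defining sum is infinite and hence \<open>0\<close>.\<close>

definition flin :: "(('x \<Rightarrow> 'k::comm_ring_1) \<Rightarrow> ('y \<Rightarrow> 'k)) \<Rightarrow> bool" where
  "flin L \<longleftrightarrow> (\<forall>f\<in>fsupp. L f \<in> fsupp)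
     \<and> (\<forall>f\<in>fsupp. \<forall>g\<in>fsupp. L (f + g) = L f + L g)
     \<and> (\<forall>c. \<forall>f\<in>fsupp. L (fscale c f) = fscale c (L f))"

lemma flin_fsupp: "flin L \<Longrightarrow> f \<in> fsupp \<Longrightarrow> L f \<in> fsupp"
  by (simp add: flin_def)

lemma flin_add: "flin L \<Longrightarrow> f \<in> fsupp \<Longrightarrow> g \<in> fsupp \<Longrightarrow> L (f + g) = L f + L g"
  by (simp add: flin_def)

lemma flin_scale: "flin L \<Longrightarrow> f \<in> fsupp \<Longrightarrow> L (fscale c f) = fscale c (L f)"
  by (simp add: flin_def)

lemma flin_zero: "flin L \<Longrightarrow> L 0 = 0"
  using flin_add[OF _ fsupp_zero fsupp_zero] by simp

lemma flin_diff: "flin L \<Longrightarrow> f \<in> fsupp \<Longrightarrow> g \<in> fsupp \<Longrightarrow> L (f - g) = L f - L g"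
  using flin_add[OF _ fsupp_diff, of L f g g] by simp

lemma flin_cong: "flin L \<Longrightarrow> (\<And>f. f \<in> fsupp \<Longrightarrow> L' f = L f) \<Longrightarrow> flin L'"
  by (auto simp: flin_def fsupp_add fsupp_scale)

lemma flin_id: "flin (\<lambda>f. f)"
  by (simp add: flin_def)

lemma flin_comp: "flin L1 \<Longrightarrow> flin L2 \<Longrightarrow> flin (\<lambda>f. L1 (L2 f))"
  by (auto simp: flin_def)

lemma flin_plus: "flin L1 \<Longrightarrow> flin L2 \<Longrightarrow> flin (\<lambda>f. L1 f + L2 f)"
  by (auto simp: flin_def fsupp_add fm.scale_right_distrib)

lemma flin_minus: "flin L1 \<Longrightarrow> flin L2 \<Longrightarrow> flin (\<lambda>f. L1 f - L2 f)"
  by (auto simp: flin_def fsupp_diff fm.scale_right_diff_distrib)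

lemma flin_fscale: "flin (fscale c :: ('x \<Rightarrow> 'k::comm_ring_1) \<Rightarrow> _)"
  by (auto simp: flin_def fsupp_scale fm.scale_right_distrib mult.commute)

lemma flin_memI:
  assumes "flin L" "fm.subspace V" "\<And>p. L (fdelta p) \<in> V" "f \<in> fsupp"
  shows "L f \<in> V"
  using assms(4)
proof (induction rule: fsupp_induct)
  case zero
  show ?case
    using flin_zero[OF assms(1)] fm.subspace_0[OF assms(2)] by (simp only:)
next
  case (add c p g)
  have "L (fscale c (fdelta p) + g) = fscale c (L (fdelta p)) + L g"
    using add.hyps by (simp add: flin_add[OF assms(1)] flin_scale[OF assms(1)] fsupp_scale)
  also have "\<dots> \<in> V"
    by (rule fm.subspace_add[OF assms(2) fm.subspace_scale[OF assms(2) assms(3)] add.IH])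
  finally show ?case .
qed

lemma flin_memI2:
  assumes "\<And>g. g \<in> fsupp \<Longrightarrow> flin (\<lambda>f. B f g)" "\<And>f. f \<in> fsupp \<Longrightarrow> flin (B f)"
    and "fm.subspace V" "\<And>p q. B (fdelta p) (fdelta q) \<in> V" "f \<in> fsupp" "g \<in> fsupp"
  shows "B f g \<in> V"
  by (rule flin_memI[OF assms(1)[OF \<open>g \<in> fsupp\<close>] assms(3) flin_memI[OF assms(2)] assms(5)])
    (use assms in auto)

lemma flin_eqI:
  assumes "flin L1" "flin L2" "\<And>p. L1 (fdelta p) = L2 (fdelta p)" "f \<in> fsupp"
  shows "L1 f = L2 f"
  using flin_memI[OF flin_minus[OF assms(1,2)] fm.subspace_single_0, of f] assms(3,4) by simp

lemma flin_span:
  assumes "flin L" "B \<subseteq> fsupp" "\<And>v. v \<in> B \<Longrightarrow> L v \<in> fm.span C" "v \<in> fm.span B"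
  shows "L v \<in> fm.span C"
proof -
  have "v \<in> fsupp \<and> L v \<in> fm.span C"
    using assms(4)
  proof (induction rule: fm.span_induct_alt)
    case base
    show ?case
      using flin_zero[OF assms(1)] by (metis fm.span_zero fsupp_zero)
  next
    case (step c x y)
    then have "x \<in> fsupp"
      using assms(2) by auto
    then have "L (fscale c x + y) = fscale c (L x) + L y"
      using step.IH by (simp add: flin_add[OF assms(1)] flin_scale[OF assms(1)] fsupp_scale)
    then show ?case
      using step assms(3) \<open>x \<in> fsupp\<close> by (metis fm.span_add fm.span_scale fsupp_add fsupp_scale)
  qed
  then show ?thesis
    by simp
qed

definition lext :: "('x \<Rightarrow> 'y \<Rightarrow> 'k::comm_ring_1) \<Rightarrow> ('x \<Rightarrow> 'k) \<Rightarrow> 'y \<Rightarrow> 'k" where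
  "lext h f = (\<lambda>y. \<Sum>p\<in>{p. f p \<noteq> 0}. f p * h p y)"

lemma lext_superset:
  assumes "finite A" "{p. f p \<noteq> 0} \<subseteq> A"
  shows "lext h f = (\<lambda>y. \<Sum>p\<in>A. f p * h p y)"
  unfolding lext_def using assms by (auto intro!: ext sum.mono_neutral_left)

lemma lext_fdelta: "lext h (fdelta p) = h p"
proof -
  have "lext h (fdelta p) = (\<lambda>y. \<Sum>q\<in>{p}. fdelta p q * h q y)"
    by (rule lext_superset) (auto simp: fdelta_apply)
  then show ?thesis
    by (simp add: fdelta_apply)
qed

lemma flin_lext:
  fixes h :: "'x \<Rightarrow> 'y \<Rightarrow> 'k::comm_ring_1"
  assumes h: "\<And>p. h p \<in> fsupp"
  shows "flin (lext h)"
  unfolding flin_def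
proof (intro conjI ballI allI)
  fix f :: "'x \<Rightarrow> 'k"
  assume f: "f \<in> fsupp"
  have "{y. lext h f y \<noteq> 0} \<subseteq> (\<Union>p\<in>{p. f p \<noteq> 0}. {y. h p y \<noteq> 0})"
    by (auto simp: lext_def elim!: sum.not_neutral_contains_not_neutral)
  moreover have "finite (\<Union>p\<in>{p. f p \<noteq> 0}. {y. h p y \<noteq> 0})"
    using f h by (auto simp: fsupp_iff)
  ultimately show "lext h f \<in> fsupp"
    by (auto simp: fsupp_iff intro: finite_subset)
next
  fix f g :: "'x \<Rightarrow> 'k"
  assume "f \<in> fsupp" "g \<in> fsupp"
  then have A: "finite ({p. f p \<noteq> 0} \<union> {p. g p \<noteq> 0})"
    by (simp add: fsupp_iff)
  show "lext h (f + g) = lext h f + lext h g"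
    by (subst (1 2 3) lext_superset[OF A]) (auto simp: distrib_right sum.distrib)
next
  fix c and f :: "'x \<Rightarrow> 'k"
  assume "f \<in> fsupp"
  then have A: "finite {p. f p \<noteq> 0}"
    by (simp add: fsupp_iff)
  show "lext h (fscale c f) = fscale c (lext h f)"
    by (subst (1 2) lext_superset[OF A]) (auto simp: fscale_apply sum_distrib_left mult.assoc)
qed

definition fmap :: "('x \<Rightarrow> 'y) \<Rightarrow> ('x \<Rightarrow> 'k::comm_ring_1) \<Rightarrow> 'y \<Rightarrow> 'k" where
  "fmap \<phi> = lext (\<lambda>p. fdelta (\<phi> p))"

lemma fmap_fdelta: "fmap \<phi> (fdelta p) = fdelta (\<phi> p)"
  by (simp add: fmap_def lext_fdelta)

lemma flin_fmap: "flin (fmap \<phi>)"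
  unfolding fmap_def by (rule flin_lext) simp

lemma fmap_fmap: "f \<in> fsupp \<Longrightarrow> fmap \<phi> (fmap \<chi> f) = fmap (\<phi> \<circ> \<chi>) f"
  by (rule flin_eqI[OF flin_comp[OF flin_fmap flin_fmap] flin_fmap]) (simp add: fmap_fdelta)

lemma fmap_id: "f \<in> fsupp \<Longrightarrow> fmap id f = f"
  by (rule flin_eqI[OF flin_fmap flin_id]) (simp add: fmap_fdelta)

lemma fsact_eq_fmap:
  fixes f :: "'a \<times> 's::comm_ring_1 \<Rightarrow> 'k::field"
  assumes "f \<in> fsupp"
  shows "fsact s f = fmap (map_prod id (\<lambda>t. t * s)) f"
proof (rule ext, clarify)
  fix b :: 'a and t :: 's
  have fin: "finite {p. f p \<noteq> 0}"
    using assms by (simp add: fsupp_iff)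
  have "fsact s f (b, t) = (\<Sum>p\<in>{p \<in> {p. f p \<noteq> 0}. fst p = b \<and> snd p * s = t}. f p)"
    unfolding fsact_def by (simp add: conj_assoc)
  also have "\<dots> = (\<Sum>p\<in>{p. f p \<noteq> 0}. if fst p = b \<and> snd p * s = t then f p else 0)"
    by (rule sum.inter_filter[OF fin])
  also have "\<dots> = fmap (map_prod id (\<lambda>t. t * s)) f (b, t)"
    unfolding fmap_def lext_def by (auto intro!: sum.cong simp: fdelta_apply map_prod_def split_beta)
  finally show "fsact s f (b, t) = fmap (map_prod id (\<lambda>t. t * s)) f (b, t)" .
qed

lemma flin_fsact: "flin (fsact s :: ('a \<times> 's::comm_ring_1 \<Rightarrow> 'k::field) \<Rightarrow> _)"
  by (rule flin_cong[OF flin_fmap]) (rule fsact_eq_fmap)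

lemma fsact_fdelta: "fsact s (fdelta (a, t) :: 'a \<times> 's::comm_ring_1 \<Rightarrow> 'k::field) = fdelta (a, t * s)"
  by (simp add: fsact_eq_fmap fmap_fdelta)

lemma fsact_fsact:
  fixes f :: "'a \<times> 's::comm_ring_1 \<Rightarrow> 'k::field"
  assumes "f \<in> fsupp"
  shows "fsact s' (fsact s f) = fsact (s * s') f"
proof -
  have "fsact s f \<in> fsupp"
    by (rule flin_fsupp[OF flin_fsact assms])
  then show ?thesis
    using assms by (simp add: fsact_eq_fmap fmap_fmap map_prod.comp) (simp add: comp_def mult.assoc)
qed

lemma fsact_one:
  fixes f :: "'a \<times> 's::comm_ring_1 \<Rightarrow> 'k::field"
  assumes "f \<in> fsupp"
  shows "fsact 1 f = f"
  using assms by (simp add: fsact_eq_fmap fmap_id map_prod.id flip: id_def)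

lemma fmul_eq_lext_left:
  fixes f g :: "'a \<times> 's::comm_ring_1 \<Rightarrow> 'k::field"
  assumes "f \<in> fsupp" "g \<in> fsupp"
  shows "fmul mA f g = lext (\<lambda>p. lext (\<lambda>q. fdelta (mA (fst p) (fst q), snd p * snd q)) g) f"
proof (rule ext, clarify)
  fix b :: 'a and t :: 's
  let ?F = "{p. f p \<noteq> 0}" and ?G = "{q. g q \<noteq> 0}"
  let ?C = "\<lambda>p q. mA (fst p) (fst q) = b \<and> snd p * snd q = t"
  have fin: "finite (?F \<times> ?G)"
    using assms by (simp add: fsupp_iff)
  have "fmul mA f g (b, t) = (\<Sum>pq\<in>{pq \<in> ?F \<times> ?G. ?C (fst pq) (snd pq)}. f (fst pq) * g (snd pq))"
    unfolding fmul_def by (auto intro!: sum.cong simp: case_prod_beta)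
  also have "\<dots> = (\<Sum>pq\<in>?F \<times> ?G. if ?C (fst pq) (snd pq) then f (fst pq) * g (snd pq) else 0)"
    by (rule sum.inter_filter[OF fin])
  also have "\<dots> = (\<Sum>p\<in>?F. \<Sum>q\<in>?G. if ?C p q then f p * g q else 0)"
    by (simp add: sum.cartesian_product case_prod_beta)
  also have "\<dots> = lext (\<lambda>p. lext (\<lambda>q. fdelta (mA (fst p) (fst q), snd p * snd q)) g) f (b, t)"
    unfolding lext_def by (auto intro!: sum.cong simp: fdelta_apply sum_distrib_left)
  finally show "fmul mA f g (b, t) = \<dots>" .
qed

lemma fmul_eq_lext_right:
  fixes f g :: "'a \<times> 's::comm_ring_1 \<Rightarrow> 'k::field"
  assumes "f \<in> fsupp" "g \<in> fsupp"
  shows "fmul mA f g = lext (\<lambda>q. lext (\<lambda>p. fdelta (mA (fst p) (fst q), snd p * snd q)) f) g"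
  unfolding fmul_eq_lext_left[OF assms] lext_def
  by (rule ext, simp add: sum_distrib_left, subst sum.swap, simp add: mult_ac)

lemma flin_fmul_left:
  fixes g :: "'a \<times> 's::comm_ring_1 \<Rightarrow> 'k::field"
  assumes "g \<in> fsupp"
  shows "flin (\<lambda>f. fmul mA f g)"
  by (rule flin_cong[OF flin_lext]) (simp_all add: fmul_eq_lext_left assms flin_fsupp[OF flin_lext])

lemma flin_fmul_right:
  fixes f :: "'a \<times> 's::comm_ring_1 \<Rightarrow> 'k::field"
  assumes "f \<in> fsupp"
  shows "flin (fmul mA f)"
  by (rule flin_cong[OF flin_lext]) (simp_all add: fmul_eq_lext_right assms flin_fsupp[OF flin_lext])

lemma fmul_fdelta_right:
  fixes f :: "'a \<times> 's::comm_ring_1 \<Rightarrow> 'k::field"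
  assumes "f \<in> fsupp"
  shows "fmul mA f (fdelta (b, t)) = fmap (map_prod (\<lambda>a. mA a b) (\<lambda>s. s * t)) f"
  by (simp add: fmul_eq_lext_left assms lext_fdelta fmap_def map_prod_def split_beta)

lemma fmul_fdelta_left:
  fixes g :: "'a \<times> 's::comm_ring_1 \<Rightarrow> 'k::field"
  assumes "g \<in> fsupp"
  shows "fmul mA (fdelta (a, s)) g = fmap (map_prod (mA a) (\<lambda>t. s * t)) g"
  by (simp add: fmul_eq_lext_right assms lext_fdelta fmap_def map_prod_def split_beta)

lemma fmul_fdelta:
  "fmul mA (fdelta (a, s)) (fdelta (b, t) :: 'a \<times> 's::comm_ring_1 \<Rightarrow> 'k::field) = fdelta (mA a b, s * t)"
  by (simp add: fmul_fdelta_right fmap_fdelta)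

lemma fmul_fsact_fdelta:
  fixes f :: "'a \<times> 's::comm_ring_1 \<Rightarrow> 'k::field"
  assumes "f \<in> fsupp"
  shows "fmul mA (fsact s f) (fdelta (b, t)) = fsact (s * t) (fmul mA f (fdelta (b, 1)))"
proof -
  have "fsact s f \<in> fsupp" "fmul mA f (fdelta (b, 1)) \<in> fsupp"
    using assms by (simp_all add: flin_fsupp[OF flin_fsact] flin_fsupp[OF flin_fmul_left])
  then show ?thesis
    using assms
    by (simp add: fsact_eq_fmap fmul_fdelta_right fmap_fmap map_prod.comp) (simp add: comp_def mult_ac)
qed

lemma fmul_fdelta_fsact:
  fixes g :: "'a \<times> 's::comm_ring_1 \<Rightarrow> 'k::field"
  assumes "g \<in> fsupp"
  shows "fmul mA (fdelta (a, s)) (fsact t g) = fsact (s * t) (fmul mA (fdelta (a, 1)) g)"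
proof -
  have "fsact t g \<in> fsupp" "fmul mA (fdelta (a, 1)) g \<in> fsupp"
    using assms by (simp_all add: flin_fsupp[OF flin_fsact] flin_fsupp[OF flin_fmul_right])
  then show ?thesis
    using assms
    by (simp add: fsact_eq_fmap fmul_fdelta_left fmap_fmap map_prod.comp) (simp add: comp_def mult_ac)
qed

section \<open>The tensor product as a quotient of the free space\<close>

lemma tens_rels_cases:
  assumes "v \<in> tens_rels sA sS"
  obtains (add_left) a a' s where "v = fdelta (a + a', s) - fdelta (a, s) - fdelta (a', s)"
  | (add_right) a s s' where "v = fdelta (a, s + s') - fdelta (a, s) - fdelta (a, s')"
  | (scale_left) c a s where "v = fdelta (sA c a, s) - fscale c (fdelta (a, s))"
  | (scale_right) c a s where "v = fdelta (a, sS c s) - fscale c (fdelta (a, s))"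
  using assms unfolding tens_rels_def by blast

lemma tens_rels_add_left: "fdelta (a + a', s) - fdelta (a, s) - fdelta (a', s) \<in> tens_rels sA sS"
  and tens_rels_add_right: "fdelta (a, s + s') - fdelta (a, s) - fdelta (a, s') \<in> tens_rels sA sS"
  and tens_rels_scale_left: "fdelta (sA c a, s) - fscale c (fdelta (a, s)) \<in> tens_rels sA sS"
  and tens_rels_scale_right: "fdelta (a, sS c s) - fscale c (fdelta (a, s)) \<in> tens_rels sA sS"
  unfolding tens_rels_def by blast+

lemma tens_rels_fsupp: "tens_rels sA sS \<subseteq> fsupp"
  by (auto elim!: tens_rels_cases intro!: fsupp_diff fsupp_scale)

lemma fmap_tens_rels:
  assumes \<alpha>_add: "\<And>x y. \<alpha> (x + y) = \<alpha> x + \<alpha> y" and \<alpha>_scale: "\<And>c x. \<alpha> (sA c x) = sA c (\<alpha> x)"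
    and \<sigma>_add: "\<And>x y. \<sigma> (x + y) = \<sigma> x + \<sigma> y" and \<sigma>_scale: "\<And>c x. \<sigma> (sS c x) = sS c (\<sigma> x)"
    and v: "v \<in> tens_rels sA sS"
  shows "fmap (map_prod \<alpha> \<sigma>) v \<in> tens_rels sA sS"
  using v
proof (cases rule: tens_rels_cases)
  case (add_left a a' s)
  then show ?thesis
    by (simp add: flin_diff[OF flin_fmap] fsupp_diff fmap_fdelta \<alpha>_add tens_rels_add_left)
next
  case (add_right a s s')
  then show ?thesis
    by (simp add: flin_diff[OF flin_fmap] fsupp_diff fmap_fdelta \<sigma>_add tens_rels_add_right)
next
  case (scale_left c a s)
  then show ?thesis
    by (simp add: flin_diff[OF flin_fmap] flin_scale[OF flin_fmap] fsupp_scale fmap_fdelta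
        \<alpha>_scale tens_rels_scale_left)
next
  case (scale_right c a s)
  then show ?thesis
    by (simp add: flin_diff[OF flin_fmap] flin_scale[OF flin_fmap] fsupp_scale fmap_fdelta
        \<sigma>_scale tens_rels_scale_right)
qed

locale tensor_algebra =
  fixes sA :: "'k::field \<Rightarrow> 'a::ab_group_add \<Rightarrow> 'a"
    and mA :: "'a \<Rightarrow> 'a \<Rightarrow> 'a"
    and sS :: "'k \<Rightarrow> 's::comm_ring_1 \<Rightarrow> 's"
  assumes mA_add_left: "\<And>x y z. mA (x + y) z = mA x z + mA y z"
    and mA_add_right: "\<And>x y z. mA x (y + z) = mA x y + mA x z"
    and mA_scale_left: "\<And>c x y. mA (sA c x) y = sA c (mA x y)"
    and mA_scale_right: "\<And>c x y. mA x (sA c y) = sA c (mA x y)"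
    and S_alg: "\<And>c x y. sS c (x * y) = sS c x * y"
begin

abbreviation R where "R \<equiv> tens_rels sA sS"
abbreviation N where "N \<equiv> tens_null sA sS"
abbreviation cl where "cl \<equiv> tcls sA sS"
abbreviation T where "T \<equiv> tens_carrier sA sS"

lemma S_alg_left: "t * sS c s = sS c (t * s)"
  by (metis S_alg mult.commute)

lemma null_eq_span: "N = fm.span R"
  by (simp add: tens_null_def fm.span_explicit)

lemma null_subspace: "fm.subspace N"
  unfolding null_eq_span by (rule fm.subspace_span)

lemma rels_null: "v \<in> R \<Longrightarrow> v \<in> N"
  unfolding null_eq_span by (rule fm.span_base)

lemmas null_zero = fm.subspace_0[OF null_subspace]
  and null_add = fm.subspace_add[OF null_subspace]
  and null_diff = fm.subspace_diff[OF null_subspace]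
  and null_scale = fm.subspace_scale[OF null_subspace]

lemma null_fsupp: "N \<subseteq> fsupp"
  unfolding null_eq_span by (rule fm.span_minimal[OF tens_rels_fsupp fsupp_subspace])

text \<open>Multiplication by a basis vector on either side and the \<open>S\<close>-action are pushforwards of
  this shape, so they preserve the null space and descend to classes.\<close>

lemma fmap_null:
  assumes "\<And>x y. \<alpha> (x + y) = \<alpha> x + \<alpha> y" "\<And>c x. \<alpha> (sA c x) = sA c (\<alpha> x)"
    and "\<And>x y. \<sigma> (x + y) = \<sigma> x + \<sigma> y" "\<And>c x. \<sigma> (sS c x) = sS c (\<sigma> x)"
    and "v \<in> N"
  shows "fmap (map_prod \<alpha> \<sigma>) v \<in> N"
proof -
  have "fmap (map_prod \<alpha> \<sigma>) w \<in> fm.span R" if "w \<in> R" for w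
    using fmap_tens_rels[of \<alpha> sA \<sigma> sS w] assms(1-4) that by (simp add: fm.span_base)
  then show ?thesis
    using assms(5) unfolding null_eq_span by (rule flin_span[OF flin_fmap tens_rels_fsupp])
qed

lemma fsact_null: "v \<in> N \<Longrightarrow> fsact s v \<in> N"
  using fmap_null[of id "\<lambda>t. t * s" v] null_fsupp
  by (auto simp: fsact_eq_fmap distrib_right S_alg)

lemma fmul_null_left:
  assumes "v \<in> N" "g \<in> fsupp"
  shows "fmul mA v g \<in> N"
proof (rule flin_memI[OF flin_fmul_right null_subspace _ assms(2)])
  show "v \<in> fsupp"
    using assms(1) null_fsupp by blast
  show "fmul mA v (fdelta p) \<in> N" for p
    using fmap_null[of "\<lambda>a. mA a (fst p)" "\<lambda>s. s * snd p" v] assms(1) \<open>v \<in> fsupp\<close>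
    by (cases p) (simp add: fmul_fdelta_right mA_add_left mA_scale_left distrib_right S_alg)
qed

lemma fmul_null_right:
  assumes "v \<in> N" "f \<in> fsupp"
  shows "fmul mA f v \<in> N"
proof (rule flin_memI[OF flin_fmul_left null_subspace _ assms(2)])
  show "v \<in> fsupp"
    using assms(1) null_fsupp by blast
  show "fmul mA (fdelta p) v \<in> N" for p
    using fmap_null[of "mA (fst p)" "\<lambda>s. snd p * s" v] assms(1) \<open>v \<in> fsupp\<close>
    by (cases p) (simp add: fmul_fdelta_left mA_add_right mA_scale_right distrib_left S_alg_left)
qed


lemma tcls_iff: "g \<in> cl f \<longleftrightarrow> g - f \<in> N"
  by (simp add: tcls_def)

lemma tcls_self: "f \<in> cl f"
  by (simp add: tcls_iff null_zero)

lemma tcls_eq_iff: "cl f = cl g \<longleftrightarrow> f - g \<in> N"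
proof
  assume "cl f = cl g"
  then show "f - g \<in> N"
    using tcls_self[of f] by (simp add: tcls_iff)
next
  assume fg: "f - g \<in> N"
  have "h - f \<in> N \<longleftrightarrow> h - g \<in> N" for h
    using null_add[OF _ fg, of "h - f"] null_diff[OF _ fg, of "h - g"] by auto
  then show "cl f = cl g"
    by (auto simp: tcls_iff)
qed

lemma tens_carrier_iff: "X \<in> T \<longleftrightarrow> (\<exists>f\<in>fsupp. X = cl f)"
  by (auto simp: tens_carrier_def)

lemma tcls_in_carrier: "f \<in> fsupp \<Longrightarrow> cl f \<in> T"
  by (auto simp: tens_carrier_iff)

lemma tcls_fsupp: "f \<in> fsupp \<Longrightarrow> g \<in> cl f \<Longrightarrow> g \<in> fsupp"
  using fsupp_add[of "g - f" f] null_fsupp by (auto simp: tcls_iff)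

lemma tzero_eq_tcls: "tzero sA sS = cl 0"
  by (simp add: tzero_def tcls_def)

lemma tens_eq_tcls: "tens sA sS a s = cl (fdelta (a, s))"
  by (simp add: tens_def)

lemma tadd_tcls: "tadd (cl f) (cl g) = cl (f + g)"
proof (intro equalityI subsetI)
  fix z
  assume "z \<in> tadd (cl f) (cl g)"
  then obtain x y where "z = x + y" "x - f \<in> N" "y - g \<in> N"
    by (auto simp: tadd_def tcls_iff)
  then show "z \<in> cl (f + g)"
    using null_add[of "x - f" "y - g"] by (simp add: tcls_iff algebra_simps)
next
  fix z
  assume "z \<in> cl (f + g)"
  then have "z - g \<in> cl f"
    by (simp add: tcls_iff algebra_simps)
  then show "z \<in> tadd (cl f) (cl g)"
    unfolding tadd_def using tcls_self[of g] by force
qed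

lemma UN_eq_const: "x \<in> X \<Longrightarrow> (\<And>x. x \<in> X \<Longrightarrow> F x = C) \<Longrightarrow> (\<Union>x\<in>X. F x) = C"
  by auto

lemma tscale_tcls: "tscale sA sS c (cl f) = cl (fscale c f)"
  unfolding tscale_def
proof (rule UN_eq_const[OF tcls_self])
  fix x
  assume "x \<in> cl f"
  then have "fscale c (x - f) \<in> N"
    by (simp add: tcls_iff null_scale)
  then show "cl (fscale c x) = cl (fscale c f)"
    by (simp add: tcls_eq_iff fm.scale_right_diff_distrib)
qed

lemma tsact_tcls:
  assumes "f \<in> fsupp"
  shows "tsact sA sS s (cl f) = cl (fsact s f)"
  unfolding tsact_def
proof (rule UN_eq_const[OF tcls_self])
  fix x
  assume x: "x \<in> cl f"
  then have "fsact s (x - f) \<in> N"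
    by (simp add: tcls_iff fsact_null)
  then show "cl (fsact s x) = cl (fsact s f)"
    using tcls_fsupp[OF assms x] assms by (simp add: tcls_eq_iff flin_diff[OF flin_fsact])
qed

lemma tmul_tcls:
  assumes f: "f \<in> fsupp" and g: "g \<in> fsupp"
  shows "tmul sA mA sS (cl f) (cl g) = cl (fmul mA f g)"
  unfolding tmul_def
proof (intro UN_eq_const[OF tcls_self])
  fix x y
  assume x: "x \<in> cl f" and y: "y \<in> cl g"
  have xs: "x \<in> fsupp" and ys: "y \<in> fsupp"
    using tcls_fsupp f g x y by blast+
  have "fmul mA x y - fmul mA f g = fmul mA (x - f) y + fmul mA f (y - g)"
    by (simp add: flin_diff[OF flin_fmul_left[OF ys] xs f] flin_diff[OF flin_fmul_right[OF f] ys g])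
  also have "\<dots> \<in> N"
    using x y by (simp add: tcls_iff null_add fmul_null_left fmul_null_right ys f)
  finally show "cl (fmul mA x y) = cl (fmul mA f g)"
    by (simp add: tcls_eq_iff)
qed

lemma fsact_add_null:
  assumes "f \<in> fsupp"
  shows "fsact (s + s') f - fsact s f - fsact s' f \<in> N"
proof (rule flin_memI[OF _ null_subspace _ assms])
  show "flin (\<lambda>f. fsact (s + s') f - fsact s f - fsact s' f)"
    by (intro flin_minus flin_fsact)
  show "fsact (s + s') (fdelta p) - fsact s (fdelta p) - fsact s' (fdelta p) \<in> N" for p
    using rels_null[OF tens_rels_add_right[of "fst p" "snd p * s" "snd p * s'"]]
    by (cases p) (simp add: fsact_fdelta distrib_left)
qed

lemma fsact_scale_null:
  assumes "f \<in> fsupp"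
  shows "fsact (sS c s) f - fscale c (fsact s f) \<in> N"
proof (rule flin_memI[OF _ null_subspace _ assms])
  show "flin (\<lambda>f. fsact (sS c s) f - fscale c (fsact s f))"
    by (intro flin_minus flin_fsact flin_comp[OF flin_fscale])
  show "fsact (sS c s) (fdelta p) - fscale c (fsact s (fdelta p)) \<in> N" for p
    using rels_null[OF tens_rels_scale_right[where a = "fst p" and c = c and s = "snd p * s"]]
    by (cases p) (simp add: fsact_fdelta S_alg_left)
qed

section \<open>Derivations of the tensor product and their lifts\<close>

lemma tens_der_carrier: "d \<in> tens_der sA mA sS \<Longrightarrow> X \<in> T \<Longrightarrow> d X \<in> T"
  and tens_der_tadd: "d \<in> tens_der sA mA sS \<Longrightarrow> X \<in> T \<Longrightarrow> Y \<in> T \<Longrightarrow>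
    d (tadd X Y) = tadd (d X) (d Y)"
  and tens_der_tscale: "d \<in> tens_der sA mA sS \<Longrightarrow> X \<in> T \<Longrightarrow>
    d (tscale sA sS c X) = tscale sA sS c (d X)"
  and tens_der_tmul: "d \<in> tens_der sA mA sS \<Longrightarrow> X \<in> T \<Longrightarrow> Y \<in> T \<Longrightarrow>
    d (tmul sA mA sS X Y) = tadd (tmul sA mA sS (d X) Y) (tmul sA mA sS X (d Y))"
  by (simp_all add: tens_der_def derivations_def)

text \<open>Derivations of \<open>A \<otimes> S\<close> are exactly the maps induced by linear maps of the free space
  that preserve the null space and satisfy the Leibniz rule modulo it.\<close>

definition der_mod_null :: "(('a \<times> 's \<Rightarrow> 'k) \<Rightarrow> 'a \<times> 's \<Rightarrow> 'k) \<Rightarrow> bool" where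
  "der_mod_null \<psi> \<longleftrightarrow> flin \<psi> \<and> (\<forall>v\<in>N. \<psi> v \<in> N)
     \<and> (\<forall>f\<in>fsupp. \<forall>g\<in>fsupp. \<psi> (fmul mA f g) - (fmul mA (\<psi> f) g + fmul mA f (\<psi> g)) \<in> N)"

definition tinduce :: "(('a \<times> 's \<Rightarrow> 'k) \<Rightarrow> 'a \<times> 's \<Rightarrow> 'k) \<Rightarrow> ('a \<times> 's \<Rightarrow> 'k) set \<Rightarrow> ('a \<times> 's \<Rightarrow> 'k) set"
  where "tinduce \<psi> X = cl (\<psi> (SOME f. f \<in> fsupp \<and> X = cl f))"

lemma tinduce_tcls:
  assumes "der_mod_null \<psi>" "f \<in> fsupp"
  shows "tinduce \<psi> (cl f) = cl (\<psi> f)"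
proof -
  let ?f = "SOME f'. f' \<in> fsupp \<and> cl f = cl f'"
  have "?f \<in> fsupp \<and> cl f = cl ?f"
    by (rule someI[of _ f]) (simp add: assms(2))
  then have "?f \<in> fsupp" "?f - f \<in> N"
    using tcls_eq_iff[of ?f f] by auto
  then have "\<psi> ?f - \<psi> f \<in> N"
    using assms by (auto simp: der_mod_null_def flin_diff[symmetric])
  then show ?thesis
    by (simp add: tinduce_def tcls_eq_iff)
qed

lemma tinduce_tens_der:
  assumes \<psi>: "der_mod_null \<psi>"
  shows "tinduce \<psi> \<in> tens_der sA mA sS"
proof -
  have lin: "flin \<psi>" and leibniz: "\<And>f g. f \<in> fsupp \<Longrightarrow> g \<in> fsupp \<Longrightarrow>
      \<psi> (fmul mA f g) - (fmul mA (\<psi> f) g + fmul mA f (\<psi> g)) \<in> N"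
    using \<psi> by (simp_all add: der_mod_null_def)
  note tcls = tinduce_tcls[OF \<psi>] flin_fsupp[OF lin]
  show ?thesis
    unfolding tens_der_def derivations_def
  proof (intro CollectI conjI ballI allI)
    fix X
    assume "X \<in> T"
    then show "tinduce \<psi> X \<in> T"
      by (auto simp: tens_carrier_iff tcls intro: tcls_in_carrier)
  next
    fix X Y
    assume "X \<in> T" "Y \<in> T"
    then obtain f g where "f \<in> fsupp" "g \<in> fsupp" "X = cl f" "Y = cl g"
      by (auto simp: tens_carrier_iff)
    then show "tinduce \<psi> (tadd X Y) = tadd (tinduce \<psi> X) (tinduce \<psi> Y)"
      by (simp add: tadd_tcls tcls fsupp_add flin_add[OF lin])
  next
    fix c X
    assume "X \<in> T"
    then obtain f where "f \<in> fsupp" "X = cl f"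
      by (auto simp: tens_carrier_iff)
    then show "tinduce \<psi> (tscale sA sS c X) = tscale sA sS c (tinduce \<psi> X)"
      by (simp add: tscale_tcls tcls fsupp_scale flin_scale[OF lin])
  next
    fix X Y
    assume "X \<in> T" "Y \<in> T"
    then obtain f g where fg: "f \<in> fsupp" "g \<in> fsupp" and "X = cl f" "Y = cl g"
      by (auto simp: tens_carrier_iff)
    moreover have "cl (\<psi> (fmul mA f g)) = cl (fmul mA (\<psi> f) g + fmul mA f (\<psi> g))"
      using leibniz[OF fg] by (simp add: tcls_eq_iff)
    ultimately show "tinduce \<psi> (tmul sA mA sS X Y)
        = tadd (tmul sA mA sS (tinduce \<psi> X) Y) (tmul sA mA sS X (tinduce \<psi> Y))"
      by (simp add: tmul_tcls tadd_tcls tcls flin_fsupp[OF flin_fmul_left])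
  qed
qed

lemma tens_der_tcls_zero:
  assumes d: "d \<in> tens_der sA mA sS"
  shows "d (cl 0) = cl 0"
proof -
  obtain h where "h \<in> fsupp" "d (cl 0) = cl h"
    using tens_der_carrier[OF d tcls_in_carrier[OF fsupp_zero]] by (auto simp: tens_carrier_iff)
  have "d (cl 0) = d (tscale sA sS 0 (cl 0))"
    by (simp add: tscale_tcls fm.scale_zero_right)
  also have "\<dots> = tscale sA sS 0 (cl h)"
    by (simp add: tens_der_tscale[OF d] tcls_in_carrier \<open>d (cl 0) = cl h\<close>)
  also have "\<dots> = cl 0"
    by (simp add: tscale_tcls fm.scale_zero_left)
  finally show ?thesis .
qed

lemma tens_der_lift:
  assumes d: "d \<in> tens_der sA mA sS"
  obtains \<psi> where "der_mod_null \<psi>" "\<And>f. f \<in> fsupp \<Longrightarrow> d (cl f) = cl (\<psi> f)"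
proof -
  define rep where "rep X = (SOME g. g \<in> fsupp \<and> X = cl g)" for X
  have rep: "rep X \<in> fsupp \<and> X = cl (rep X)" if "X \<in> T" for X
    using that unfolding rep_def tens_carrier_iff by (metis (mono_tags, lifting) someI_ex)
  define \<psi> where "\<psi> = lext (\<lambda>p. rep (d (cl (fdelta p))))"
  have lin: "flin \<psi>"
    unfolding \<psi>_def by (rule flin_lext) (simp add: rep tens_der_carrier[OF d] tcls_in_carrier)
  have lift: "d (cl f) = cl (\<psi> f)" if "f \<in> fsupp" for f
    using that
  proof (induction rule: fsupp_induct)
    case zero
    show ?case
      using tens_der_tcls_zero[OF d] flin_zero[OF lin] by (simp only:)
  next
    case (add c p g)
    have \<delta>: "cl (fdelta p) \<in> T"
      by (simp add: tcls_in_carrier)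
    have "d (cl (fscale c (fdelta p) + g)) = d (tadd (tscale sA sS c (cl (fdelta p))) (cl g))"
      by (simp add: tadd_tcls tscale_tcls)
    also have "\<dots> = tadd (d (tscale sA sS c (cl (fdelta p)))) (d (cl g))"
      by (rule tens_der_tadd[OF d]) (simp_all add: tscale_tcls tcls_in_carrier fsupp_scale add.hyps)
    also have "d (tscale sA sS c (cl (fdelta p))) = tscale sA sS c (d (cl (fdelta p)))"
      by (rule tens_der_tscale[OF d \<delta>])
    also have "d (cl (fdelta p)) = cl (\<psi> (fdelta p))"
      using rep[OF tens_der_carrier[OF d \<delta>]] by (simp add: \<psi>_def lext_fdelta)
    also have "tadd (tscale sA sS c (cl (\<psi> (fdelta p)))) (d (cl g)) = cl (\<psi> (fscale c (fdelta p) + g))"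
      using add.hyps add.IH
      by (simp only: tscale_tcls tadd_tcls flin_add[OF lin] flin_scale[OF lin] fsupp_scale fsupp_fdelta)
    finally show ?case .
  qed
  have "\<psi> v \<in> N" if "v \<in> N" for v
  proof -
    have "v \<in> fsupp" "cl v = cl 0"
      using that null_fsupp by (auto simp: tcls_eq_iff)
    then have "cl (\<psi> v) = cl 0"
      using lift tens_der_tcls_zero[OF d] by metis
    then show ?thesis
      by (simp add: tcls_eq_iff)
  qed
  moreover have "\<psi> (fmul mA f g) - (fmul mA (\<psi> f) g + fmul mA f (\<psi> g)) \<in> N"
    if fg: "f \<in> fsupp" "g \<in> fsupp" for f g
  proof -
    have "cl (\<psi> (fmul mA f g)) = d (tmul sA mA sS (cl f) (cl g))"
      using fg by (simp add: tmul_tcls lift flin_fsupp[OF flin_fmul_left])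
    also have "\<dots> = tadd (tmul sA mA sS (d (cl f)) (cl g)) (tmul sA mA sS (cl f) (d (cl g)))"
      by (rule tens_der_tmul[OF d]) (simp_all add: tcls_in_carrier fg)
    also have "\<dots> = cl (fmul mA (\<psi> f) g + fmul mA f (\<psi> g))"
      using fg by (simp add: lift tmul_tcls tadd_tcls flin_fsupp[OF lin])
    finally show ?thesis
      by (simp add: tcls_eq_iff)
  qed
  ultimately have "der_mod_null \<psi>"
    using lin by (simp add: der_mod_null_def)
  then show ?thesis
    using lift by (rule that)
qed

lemma der_mod_null_diff:
  assumes \<psi>: "der_mod_null \<psi>" and \<phi>: "der_mod_null \<phi>"
  shows "der_mod_null (\<lambda>f. \<psi> f - \<phi> f)"
  unfolding der_mod_null_def
proof (intro conjI ballI)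
  have lin: "flin \<psi>" "flin \<phi>"
    using \<psi> \<phi> by (simp_all add: der_mod_null_def)
  then show "flin (\<lambda>f. \<psi> f - \<phi> f)"
    by (rule flin_minus)
  show "\<psi> v - \<phi> v \<in> N" if "v \<in> N" for v
    using \<psi> \<phi> that by (simp add: der_mod_null_def null_diff)
  fix f g :: "'a \<times> 's \<Rightarrow> 'k"
  assume f: "f \<in> fsupp" and g: "g \<in> fsupp"
  have "\<psi> (fmul mA f g) - \<phi> (fmul mA f g) - (fmul mA (\<psi> f - \<phi> f) g + fmul mA f (\<psi> g - \<phi> g))
      = (\<psi> (fmul mA f g) - (fmul mA (\<psi> f) g + fmul mA f (\<psi> g)))
        - (\<phi> (fmul mA f g) - (fmul mA (\<phi> f) g + fmul mA f (\<phi> g)))"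
    using f g by (simp add: flin_diff[OF flin_fmul_left[OF g]] flin_diff[OF flin_fmul_right[OF f]]
        flin_fsupp[OF lin(1)] flin_fsupp[OF lin(2)])
  also have "\<dots> \<in> N"
    using \<psi> \<phi> f g by (simp add: der_mod_null_def null_diff)
  finally show "\<psi> (fmul mA f g) - \<phi> (fmul mA f g) - (fmul mA (\<psi> f - \<phi> f) g + fmul mA f (\<psi> g - \<phi> g)) \<in> N" .
qed

text \<open>\<open>a \<otimes> s \<mapsto> \<psi>(a \<otimes> 1) s\<close>, the candidate for the \<open>\<D>\<^sub>S\<close>-component.\<close>

definition S_linear_part :: "(('a \<times> 's \<Rightarrow> 'k) \<Rightarrow> 'a \<times> 's \<Rightarrow> 'k) \<Rightarrow> ('a \<times> 's \<Rightarrow> 'k) \<Rightarrow> 'a \<times> 's \<Rightarrow> 'k"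
  where "S_linear_part \<psi> = lext (\<lambda>p. fsact (snd p) (\<psi> (fdelta (fst p, 1))))"

lemma S_linear_part_fdelta: "S_linear_part \<psi> (fdelta (a, s)) = fsact s (\<psi> (fdelta (a, 1)))"
  by (simp add: S_linear_part_def lext_fdelta)

lemma der_mod_null_S_linear_part:
  assumes \<psi>: "der_mod_null \<psi>"
  shows "der_mod_null (S_linear_part \<psi>)"
proof -
  let ?\<phi> = "S_linear_part \<psi>"
  have \<psi>_lin: "flin \<psi>" and \<psi>_null: "\<And>v. v \<in> N \<Longrightarrow> \<psi> v \<in> N"
    and \<psi>_leibniz: "\<And>f g. f \<in> fsupp \<Longrightarrow> g \<in> fsupp \<Longrightarrow>
      \<psi> (fmul mA f g) - (fmul mA (\<psi> f) g + fmul mA f (\<psi> g)) \<in> N"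
    using \<psi> by (simp_all add: der_mod_null_def)
  have r: "\<psi> (fdelta (a, 1)) \<in> fsupp" for a
    by (simp add: flin_fsupp[OF \<psi>_lin])
  have lin: "flin ?\<phi>"
    unfolding S_linear_part_def by (rule flin_lext) (simp add: flin_fsupp[OF flin_fsact] r)
  have "?\<phi> v \<in> N" if "v \<in> R" for v
    using that
  proof (cases rule: tens_rels_cases)
    case (add_left a a' s)
    then have "?\<phi> v = fsact s (\<psi> (fdelta (a + a', 1) - fdelta (a, 1) - fdelta (a', 1)))"
      by (simp add: flin_diff[OF lin] flin_diff[OF \<psi>_lin] flin_diff[OF flin_fsact] fsupp_diff r
          S_linear_part_fdelta)
    then show ?thesis
      by (simp add: fsact_null \<psi>_null rels_null tens_rels_add_left)
  next
    case (add_right a s s')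
    then show ?thesis
      by (simp add: flin_diff[OF lin] fsupp_diff S_linear_part_fdelta fsact_add_null r)
  next
    case (scale_left c a s)
    then have "?\<phi> v = fsact s (\<psi> (fdelta (sA c a, 1) - fscale c (fdelta (a, 1))))"
      by (simp add: flin_diff[OF lin] flin_scale[OF lin] flin_diff[OF \<psi>_lin] flin_scale[OF \<psi>_lin]
          flin_diff[OF flin_fsact] flin_scale[OF flin_fsact] fsupp_scale r S_linear_part_fdelta)
    then show ?thesis
      by (simp add: fsact_null \<psi>_null rels_null tens_rels_scale_left)
  next
    case (scale_right c a s)
    then show ?thesis
      by (simp add: flin_diff[OF lin] flin_scale[OF lin] fsupp_scale S_linear_part_fdelta fsact_scale_null r)
  qed
  then have null: "?\<phi> v \<in> N" if "v \<in> N" for v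
    using that unfolding null_eq_span by (rule flin_span[OF lin tens_rels_fsupp])
  have "?\<phi> (fmul mA f g) - (fmul mA (?\<phi> f) g + fmul mA f (?\<phi> g)) \<in> N"
    if "f \<in> fsupp" "g \<in> fsupp" for f g
  proof (rule flin_memI2[OF _ _ null_subspace _ that])
    show "flin (\<lambda>f. ?\<phi> (fmul mA f g) - (fmul mA (?\<phi> f) g + fmul mA f (?\<phi> g)))" if "g \<in> fsupp" for g
      by (intro flin_minus flin_plus flin_comp[OF lin] flin_comp[OF flin_fmul_left[OF that]]
          flin_fmul_left that flin_fsupp[OF lin] lin)
    show "flin (\<lambda>g. ?\<phi> (fmul mA f g) - (fmul mA (?\<phi> f) g + fmul mA f (?\<phi> g)))" if "f \<in> fsupp" for f
      by (intro flin_minus flin_plus flin_comp[OF lin] flin_comp[OF flin_fmul_right[OF that]]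
          flin_fmul_right that flin_fsupp[OF lin] lin)
  next
    fix p q :: "'a \<times> 's"
    obtain a s b t where pq: "p = (a, s)" "q = (b, t)"
      by fastforce
    have "fsact (s * t) (\<psi> (fmul mA (fdelta (a, 1)) (fdelta (b, 1)))
        - (fmul mA (\<psi> (fdelta (a, 1))) (fdelta (b, 1)) + fmul mA (fdelta (a, 1)) (\<psi> (fdelta (b, 1))))) \<in> N"
      by (simp add: fsact_null \<psi>_leibniz)
    then show "?\<phi> (fmul mA (fdelta p) (fdelta q))
        - (fmul mA (?\<phi> (fdelta p)) (fdelta q) + fmul mA (fdelta p) (?\<phi> (fdelta q))) \<in> N"
      by (simp add: pq fmul_fdelta S_linear_part_fdelta fmul_fsact_fdelta fmul_fdelta_fsact r
          flin_diff[OF flin_fsact] flin_add[OF flin_fsact] fsupp_add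
          flin_fsupp[OF flin_fmul_left] flin_fsupp[OF flin_fmul_right])
  qed
  then show ?thesis
    using lin null by (simp add: der_mod_null_def)
qed

lemma tens_der_decomposition:
  assumes "d \<in> tens_der sA mA sS"
  shows "\<exists>d1\<in>tens_der_S sA mA sS. \<exists>d2\<in>tens_der_A1 sA mA sS. \<forall>X\<in>T. d X = tadd (d1 X) (d2 X)"
proof -
  obtain \<psi> where \<psi>: "der_mod_null \<psi>" and lift: "\<And>f. f \<in> fsupp \<Longrightarrow> d (cl f) = cl (\<psi> f)"
    using tens_der_lift[OF assms] by blast
  let ?\<phi> = "S_linear_part \<psi>"
  have \<phi>: "der_mod_null ?\<phi>"
    by (rule der_mod_null_S_linear_part[OF \<psi>])
  have \<psi>\<phi>: "der_mod_null (\<lambda>f. \<psi> f - ?\<phi> f)"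
    by (rule der_mod_null_diff[OF \<psi> \<phi>])
  have r: "\<psi> (fdelta (a, 1)) \<in> fsupp" for a
    using \<psi> by (simp add: der_mod_null_def flin_fsupp)
  have "tinduce ?\<phi> \<in> tens_der_S sA mA sS"
    unfolding tens_der_S_def
  proof (intro CollectI conjI allI tinduce_tens_der[OF \<phi>])
    fix a s s'
    show "tinduce ?\<phi> (tens sA sS a (s * s')) = tsact sA sS s' (tinduce ?\<phi> (tens sA sS a s))"
      by (simp add: tens_eq_tcls tinduce_tcls[OF \<phi>] S_linear_part_fdelta tsact_tcls fsact_fsact r
          flin_fsupp[OF flin_fsact])
  qed
  moreover have "tinduce (\<lambda>f. \<psi> f - ?\<phi> f) \<in> tens_der_A1 sA mA sS"
    unfolding tens_der_A1_def
  proof (intro CollectI conjI allI tinduce_tens_der[OF \<psi>\<phi>])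
    fix a
    show "tinduce (\<lambda>f. \<psi> f - ?\<phi> f) (tens sA sS a 1) = tzero sA sS"
      by (simp add: tens_eq_tcls tinduce_tcls[OF \<psi>\<phi>] S_linear_part_fdelta fsact_one r tzero_eq_tcls)
  qed
  moreover have "d X = tadd (tinduce ?\<phi> X) (tinduce (\<lambda>f. \<psi> f - ?\<phi> f) X)" if "X \<in> T" for X
  proof -
    obtain f where "f \<in> fsupp" "X = cl f"
      using \<open>X \<in> T\<close> by (auto simp: tens_carrier_iff)
    then show ?thesis
      by (simp add: lift tinduce_tcls[OF \<phi>] tinduce_tcls[OF \<psi>\<phi>] tadd_tcls)
  qed
  ultimately show ?thesis
    by blast
qed

lemma tens_der_S_inter_A1_zero:
  assumes S: "d \<in> tens_der_S sA mA sS" and A1: "d \<in> tens_der_A1 sA mA sS" and "X \<in> T"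
  shows "d X = tzero sA sS"
proof -
  have d: "d \<in> tens_der sA mA sS"
    using S by (simp add: tens_der_S_def)
  obtain \<psi> where \<psi>: "der_mod_null \<psi>" and lift: "\<And>f. f \<in> fsupp \<Longrightarrow> d (cl f) = cl (\<psi> f)"
    using tens_der_lift[OF d] by blast
  have "\<psi> (fdelta p) \<in> N" for p
  proof -
    obtain a s where p: "p = (a, s)"
      by fastforce
    have "d (tens sA sS a (1 * s)) = tsact sA sS s (d (tens sA sS a 1))"
      using S unfolding tens_der_S_def by blast
    also have "d (tens sA sS a 1) = cl 0"
      using A1 by (simp add: tens_der_A1_def tzero_eq_tcls)
    finally have "cl (\<psi> (fdelta p)) = cl 0"
      by (simp add: p lift tens_eq_tcls tsact_tcls flin_zero[OF flin_fsact])
    then show ?thesis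
      by (simp add: tcls_eq_iff)
  qed
  then have null: "\<psi> f \<in> N" if "f \<in> fsupp" for f
    using \<psi> that by (auto simp: der_mod_null_def intro: flin_memI[OF _ null_subspace])
  obtain f where "f \<in> fsupp" "X = cl f"
    using \<open>X \<in> T\<close> by (auto simp: tens_carrier_iff)
  then show ?thesis
    using null by (simp add: lift tzero_eq_tcls tcls_eq_iff)
qed

end

theorem lemma2p1:
  fixes sA :: "'k::field \<Rightarrow> 'a::ab_group_add \<Rightarrow> 'a"
    and mA :: "'a \<Rightarrow> 'a \<Rightarrow> 'a"
    and sS :: "'k \<Rightarrow> 's::comm_ring_1 \<Rightarrow> 's"
  assumes A_vs: "vector_space sA"
    and mA_add_left: "\<And>x y z. mA (x + y) z = mA x z + mA y z"
    and mA_add_right: "\<And>x y z. mA x (y + z) = mA x y + mA x z"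
    and mA_scale_left: "\<And>c x y. mA (sA c x) y = sA c (mA x y)"
    and mA_scale_right: "\<And>c x y. mA x (sA c y) = sA c (mA x y)"
    and S_vs: "vector_space sS"
    and S_alg: "\<And>c x y. sS c (x * y) = sS c x * y"
  shows "(\<forall>d\<in>tens_der sA mA sS. \<exists>d1\<in>tens_der_S sA mA sS. \<exists>d2\<in>tens_der_A1 sA mA sS.
            \<forall>X\<in>tens_carrier sA sS. d X = tadd (d1 X) (d2 X))
       \<and> (\<forall>d\<in>tens_der_S sA mA sS \<inter> tens_der_A1 sA mA sS.
            \<forall>X\<in>tens_carrier sA sS. d X = tzero sA sS)"
proof -
  interpret tensor_algebra sA mA sS
    by unfold_locales (fact mA_add_left mA_add_right mA_scale_left mA_scale_right S_alg)+
  show ?thesis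
    using tens_der_decomposition tens_der_S_inter_A1_zero by blast
qed

end
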